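(* Let $P$ be an $r$-differential poset and $P'$ an $r'$-differential poset, and let $p''_n$ be the number of rank-$n$ elements of the Cartesian product $P\times P'$ (with $p''_k=0$ for $k<0$ and $\Delta p''_n=p''_n-p''_{n-1}$). Then for every $n\ge1$ and $1\le j\le n$ one has $\Delta p''_n\ge \Delta p''_{n-j}$; that is, $\Delta p''_1\le\Delta p''_2\le\cdots$.
   Context: An $r$-differential poset ($r$ a positive integer) is a graded poset with a minimum element, finite intervals and finite rank sets, such that an element covering exactly $m$ elements is covered by exactly $m+r$ elements, and two distinct elements that both cover exactly $m$ common elements are both covered by exactly $m$ common elements. The Cartesian product $P\times P'$ carries the componentwise order and rank function equal to the sum of ranks; it is an $(r+r')$-differential poset. *)

theory Defs
  imports Main
begin

definition poset_on :: "'a set \<Rightarrow> ('a \<Rightarrow> 'a \<Rightarrow> bool) \<Rightarrow> bool" where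
  "poset_on P le \<longleftrightarrow>
     (\<forall>x\<in>P. le x x) \<and>
     (\<forall>x\<in>P. \<forall>y\<in>P. le x y \<and> le y x \<longrightarrow> x = y) \<and>
     (\<forall>x\<in>P. \<forall>y\<in>P. \<forall>z\<in>P. le x y \<and> le y z \<longrightarrow> le x z)"

definition covers :: "'a set \<Rightarrow> ('a \<Rightarrow> 'a \<Rightarrow> bool) \<Rightarrow> 'a \<Rightarrow> 'a \<Rightarrow> bool" where
  "covers P le x y \<longleftrightarrow> x \<in> P \<and> y \<in> P \<and> le x y \<and> x \<noteq> y \<and>
     \<not> (\<exists>z\<in>P. le x z \<and> le z y \<and> z \<noteq> x \<and> z \<noteq> y)"

definition graded_locfin_poset :: "'a set \<Rightarrow> ('a \<Rightarrow> 'a \<Rightarrow> bool) \<Rightarrow> ('a \<Rightarrow> nat) \<Rightarrow> bool" where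
  "graded_locfin_poset P le rk \<longleftrightarrow>
     poset_on P le \<and>
     (\<exists>z\<in>P. (\<forall>x\<in>P. le z x) \<and> rk z = 0) \<and>
     (\<forall>x y. covers P le x y \<longrightarrow> rk y = rk x + 1) \<and>
     (\<forall>x\<in>P. \<forall>y\<in>P. finite {z\<in>P. le x z \<and> le z y}) \<and>
     (\<forall>n. finite {x\<in>P. rk x = n})"

definition differential_poset ::
  "'a set \<Rightarrow> ('a \<Rightarrow> 'a \<Rightarrow> bool) \<Rightarrow> ('a \<Rightarrow> nat) \<Rightarrow> nat \<Rightarrow> bool" where
  "differential_poset P le rk r \<longleftrightarrow>
     r > 0 \<and> graded_locfin_poset P le rk \<and>
     (\<forall>x\<in>P. \<forall>m. card {y. covers P le y x} = m \<longrightarrow>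
          finite {y. covers P le x y} \<and> card {y. covers P le x y} = m + r) \<and>
     (\<forall>x\<in>P. \<forall>y\<in>P. \<forall>m. x \<noteq> y \<and>
          card {z. covers P le z x \<and> covers P le z y} = m \<longrightarrow>
          finite {z. covers P le x z \<and> covers P le y z} \<and>
          card {z. covers P le x z \<and> covers P le y z} = m)"

definition prod_le :: "('a \<Rightarrow> 'a \<Rightarrow> bool) \<Rightarrow> ('b \<Rightarrow> 'b \<Rightarrow> bool) \<Rightarrow> 'a \<times> 'b \<Rightarrow> 'a \<times> 'b \<Rightarrow> bool" where
  "prod_le le le' u v \<longleftrightarrow> le (fst u) (fst v) \<and> le' (snd u) (snd v)"

definition prod_rk :: "('a \<Rightarrow> nat) \<Rightarrow> ('b \<Rightarrow> nat) \<Rightarrow> 'a \<times> 'b \<Rightarrow> nat" where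
  "prod_rk rk rk' u = rk (fst u) + rk' (snd u)"

definition rank_count :: "'a set \<Rightarrow> ('a \<Rightarrow> nat) \<Rightarrow> int \<Rightarrow> int" where
  "rank_count P rk n = (if n < 0 then 0 else int (card {x\<in>P. rk x = nat n}))"

definition delta_rank_count :: "'a set \<Rightarrow> ('a \<Rightarrow> nat) \<Rightarrow> int \<Rightarrow> int" where
  "delta_rank_count P rk n = rank_count P rk n - rank_count P rk (n - 1)"

end

theory Submission
  imports Defs Complex_Main "HOL-Library.Function_Algebras"
begin

text \<open>Let \<open>U\<close> be the up operator sending an element to the sum of the elements covering it,
  and \<open>D\<close> its adjoint. The defining relations of an \<open>r\<close>-differential poset say \<open>DU = UD + rI\<close>,
  so for a vector \<open>c\<close> on rank \<open>n\<close> we get \<open>\<parallel>Uc\<parallel>\<^sup>2 = \<parallel>Dc\<parallel>\<^sup>2 + r\<parallel>c\<parallel>\<^sup>2\<close>. Hence \<open>U\<close> is injective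
  from rank \<open>n\<close> to rank \<open>n + 1\<close> and the rank sizes \<open>p\<^sub>n\<close> are weakly increasing.
  The rank sizes of \<open>P \<times> P'\<close> form the convolution \<open>p \<star> p'\<close>, and \<open>\<Delta>(p \<star> p') = \<Delta>p \<star> p'\<close>.
  A convolution of a nonnegative sequence with a nonnegative nondecreasing one is nondecreasing.\<close>

definition fun_scale :: "real \<Rightarrow> ('b \<Rightarrow> real) \<Rightarrow> 'b \<Rightarrow> real" where
  "fun_scale c f = (\<lambda>x. c * f x)"

interpretation fun_vs: vector_space fun_scale
  by unfold_locales (simp_all add: fun_scale_def fun_eq_iff distrib_left distrib_right)

lemma sum_fun_apply: "(sum f A) x = (\<Sum>a\<in>A. f a x)" for f :: "'i \<Rightarrow> 'b \<Rightarrow> real"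
  by (induction A rule: infinite_finite_induct) auto

lemma inj_on_if_scalars_zero:
  fixes M :: "'a \<Rightarrow> 'b \<Rightarrow> real"
  assumes "finite S"
    and ker: "\<And>c. \<forall>y. (\<Sum>s\<in>S. c s * M s y) = 0 \<Longrightarrow> \<forall>s\<in>S. c s = 0"
  shows "inj_on M S"
proof (rule inj_onI, rule ccontr)
  fix s s' assume s: "s \<in> S" "s' \<in> S" "M s = M s'" "s \<noteq> s'"
  define c where "c x = (if x = s then (1::real) else if x = s' then -1 else 0)" for x
  have "\<forall>y. (\<Sum>x\<in>S. c x * M x y) = 0"
  proof
    fix y
    have "(\<Sum>x\<in>S. c x * M x y)
        = (\<Sum>x\<in>S. (if x = s then M s y else 0) - (if x = s' then M s' y else 0))"
      by (rule sum.cong) (use s(4) in \<open>auto simp: c_def\<close>)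
    also have "\<dots> = 0" using s \<open>finite S\<close> by (simp add: sum_subtractf)
    finally show "(\<Sum>x\<in>S. c x * M x y) = 0" .
  qed
  from ker[OF this] s show False by (auto simp: c_def)
qed

lemma independent_image_if_scalars_zero:
  fixes M :: "'a \<Rightarrow> 'b \<Rightarrow> real"
  assumes "finite S" and inj: "inj_on M S"
    and ker: "\<And>c. \<forall>y. (\<Sum>s\<in>S. c s * M s y) = 0 \<Longrightarrow> \<forall>s\<in>S. c s = 0"
  shows "fun_vs.independent (M ` S)"
proof (rule fun_vs.independent_if_scalars_zero)
  show "finite (M ` S)" using \<open>finite S\<close> by simp
  fix f x assume h: "(\<Sum>v\<in>M ` S. fun_scale (f v) v) = 0" and x: "x \<in> M ` S"
  have "(\<Sum>s\<in>S. fun_scale (f (M s)) (M s)) = 0"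
    using h by (simp add: sum.reindex[OF inj])
  then have "\<forall>y. (\<Sum>s\<in>S. f (M s) * M s y) = 0"
    by (simp add: fun_eq_iff sum_fun_apply fun_scale_def)
  from ker[OF this] x show "f x = 0" by auto
qed

lemma span_indicators_if_supported:
  fixes M :: "'a \<Rightarrow> 'b \<Rightarrow> real"
  assumes "finite T" and supp: "\<And>s y. s \<in> S \<Longrightarrow> M s y \<noteq> 0 \<Longrightarrow> y \<in> T"
  shows "M ` S \<subseteq> fun_vs.span ((\<lambda>t y. if y = t then 1 else 0) ` T)"
proof
  fix v assume "v \<in> M ` S"
  then obtain s where s: "s \<in> S" "v = M s" by auto
  let ?e = "\<lambda>t y. if y = t then (1::real) else 0"
  have "M s = (\<Sum>t\<in>T. fun_scale (M s t) (?e t))"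
  proof
    fix y
    have "(\<Sum>t\<in>T. fun_scale (M s t) (?e t)) y = (\<Sum>t\<in>T. if y = t then M s t else 0)"
      unfolding sum_fun_apply fun_scale_def by (rule sum.cong) auto
    also have "\<dots> = M s y" using supp[OF s(1), of y] \<open>finite T\<close> by (cases "y \<in> T") auto
    finally show "M s y = (\<Sum>t\<in>T. fun_scale (M s t) (?e t)) y" by simp
  qed
  also have "\<dots> \<in> fun_vs.span (?e ` T)"
    by (intro fun_vs.span_sum fun_vs.span_scale fun_vs.span_base) simp
  finally show "v \<in> fun_vs.span (?e ` T)" using s by simp
qed

lemma card_le_if_scalars_zero:
  fixes M :: "'a \<Rightarrow> 'b \<Rightarrow> real"
  assumes "finite S" "finite T"
    and supp: "\<And>s y. s \<in> S \<Longrightarrow> M s y \<noteq> 0 \<Longrightarrow> y \<in> T"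
    and ker: "\<And>c. \<forall>y. (\<Sum>s\<in>S. c s * M s y) = 0 \<Longrightarrow> \<forall>s\<in>S. c s = 0"
  shows "card S \<le> card T"
proof -
  let ?e = "\<lambda>t y. if y = t then (1::real) else 0"
  have inj: "inj_on M S" using \<open>finite S\<close> ker by (rule inj_on_if_scalars_zero)
  have "card (M ` S) \<le> card (?e ` T)"
    using fun_vs.independent_span_bound[OF _ independent_image_if_scalars_zero[OF \<open>finite S\<close> inj ker]
        span_indicators_if_supported[OF \<open>finite T\<close> supp]] \<open>finite T\<close>
    by simp
  also have "\<dots> \<le> card T" using \<open>finite T\<close> card_image_le by blast
  finally show ?thesis using card_image[OF inj] by simp
qed

lemma sum_square_linear_combination:
  fixes c :: "'a \<Rightarrow> real" and M :: "'a \<Rightarrow> 'b \<Rightarrow> real"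
  shows "(\<Sum>y\<in>T. (\<Sum>s\<in>S. c s * M s y)\<^sup>2)
       = (\<Sum>s\<in>S. \<Sum>s'\<in>S. c s * c s' * (\<Sum>y\<in>T. M s y * M s' y))"
proof -
  have "(\<Sum>y\<in>T. (\<Sum>s\<in>S. c s * M s y)\<^sup>2)
      = (\<Sum>y\<in>T. \<Sum>s\<in>S. \<Sum>s'\<in>S. c s * c s' * (M s y * M s' y))"
    by (simp add: power2_eq_square sum_product algebra_simps)
  also have "\<dots> = (\<Sum>s\<in>S. \<Sum>s'\<in>S. \<Sum>y\<in>T. c s * c s' * (M s y * M s' y))"
    by (subst sum.swap) (rule sum.cong[OF refl], rule sum.swap)
  also have "\<dots> = (\<Sum>s\<in>S. \<Sum>s'\<in>S. c s * c s' * (\<Sum>y\<in>T. M s y * M s' y))"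
    by (simp add: sum_distrib_left)
  finally show ?thesis .
qed

text \<open>Hypothesis \<open>gram\<close> is the relation \<open>DU = UD + rI\<close> written entrywise on \<open>S\<close>.\<close>

lemma scalars_zero_if_gram_identity:
  fixes U :: "'a \<Rightarrow> 'b \<Rightarrow> real" and D :: "'c \<Rightarrow> 'a \<Rightarrow> real"
  assumes "finite S" "r > 0"
    and gram: "\<And>s s'. s \<in> S \<Longrightarrow> s' \<in> S \<Longrightarrow>
      (\<Sum>y\<in>T. U s y * U s' y) = (\<Sum>z\<in>R. D z s * D z s') + (if s = s' then r else 0)"
    and ker: "\<forall>y. (\<Sum>s\<in>S. c s * U s y) = 0"
  shows "\<forall>s\<in>S. c s = 0"
proof -
  have "0 = (\<Sum>y\<in>T. (\<Sum>s\<in>S. c s * U s y)\<^sup>2)" using ker by simp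
  also have "\<dots> = (\<Sum>s\<in>S. \<Sum>s'\<in>S. c s * c s' * (\<Sum>z\<in>R. D z s * D z s')
                   + (if s = s' then r * c s * c s' else 0))"
    unfolding sum_square_linear_combination
    by (intro sum.cong refl) (simp add: gram algebra_simps)
  also have "\<dots> = (\<Sum>s\<in>S. \<Sum>s'\<in>S. c s * c s' * (\<Sum>z\<in>R. D z s * D z s'))
                   + r * (\<Sum>s\<in>S. (c s)\<^sup>2)"
    using \<open>finite S\<close> by (simp add: sum.distrib sum_distrib_left power2_eq_square mult.assoc)
  also have "(\<Sum>s\<in>S. \<Sum>s'\<in>S. c s * c s' * (\<Sum>z\<in>R. D z s * D z s'))
           = (\<Sum>z\<in>R. (\<Sum>s\<in>S. c s * D z s)\<^sup>2)"
    by (rule sum_square_linear_combination[symmetric])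
  finally have "(\<Sum>s\<in>S. (c s)\<^sup>2) \<le> 0"
    using \<open>r > 0\<close> sum_nonneg[of R "\<lambda>z. (\<Sum>s\<in>S. c s * D z s)\<^sup>2"]
    by (smt (verit) mult_pos_pos sum_nonneg zero_le_power2)
  then have "(\<Sum>s\<in>S. (c s)\<^sup>2) = 0" by (simp add: sum_nonneg antisym)
  with \<open>finite S\<close> show ?thesis by (simp add: sum_nonneg_eq_0_iff)
qed

lemma sum_indicator_product:
  assumes "finite T" "\<And>y. A y \<Longrightarrow> B y \<Longrightarrow> y \<in> T"
  shows "(\<Sum>y\<in>T. (if A y then 1 else 0) * (if B y then 1 else (0::real))) = real (card {y. A y \<and> B y})"
proof -
  have "{y. A y \<and> B y} = {y\<in>T. A y \<and> B y}" using assms(2) by auto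
  moreover have "(\<Sum>y\<in>T. (if A y then 1 else 0) * (if B y then 1 else (0::real)))
               = (\<Sum>y\<in>T. if A y \<and> B y then 1 else 0)"
    by (rule sum.cong) auto
  ultimately show ?thesis using assms(1) by (simp add: sum.If_cases Int_absorb1)
qed

lemma differential_poset_finite_rank:
  "differential_poset P le rk r \<Longrightarrow> finite {x\<in>P. rk x = k}"
  by (simp add: differential_poset_def graded_locfin_poset_def)

lemma differential_poset_rank_card_mono:
  assumes D: "differential_poset P le rk r"
  shows "mono (\<lambda>n. card {x\<in>P. rk x = n})"
  unfolding mono_iff_le_Suc
proof
  fix n
  let ?cv = "covers P le"
  let ?S = "{x\<in>P. rk x = n}" and ?T = "{x\<in>P. rk x = Suc n}" and ?R = "{x\<in>P. rk x + 1 = n}"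
  have "r > 0" and G: "graded_locfin_poset P le rk" using D by (auto simp: differential_poset_def)
  note fin = differential_poset_finite_rank[OF D]
  have cover_rk: "?cv x y \<Longrightarrow> x \<in> P \<and> y \<in> P \<and> rk y = rk x + 1" for x y
    using G by (auto simp: graded_locfin_poset_def covers_def)
  have "finite ?R" by (rule finite_subset[OF _ fin[of "n - 1"]]) auto
  define M where "M s y = (if ?cv s y then 1 else (0::real))" for s y
  have gram: "(\<Sum>y\<in>?T. M s y * M s' y) = (\<Sum>z\<in>?R. M z s * M z s') + (if s = s' then real r else 0)"
    if "s \<in> ?S" "s' \<in> ?S" for s s'
  proof -
    have "(\<Sum>y\<in>?T. M s y * M s' y) = real (card {y. ?cv s y \<and> ?cv s' y})"
      unfolding M_def by (rule sum_indicator_product[OF fin]) (use that cover_rk in force)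
    moreover have "(\<Sum>z\<in>?R. M z s * M z s') = real (card {z. ?cv z s \<and> ?cv z s'})"
      unfolding M_def by (rule sum_indicator_product[OF \<open>finite ?R\<close>]) (use that cover_rk in force)
    moreover have "card {y. ?cv s y \<and> ?cv s' y} = card {z. ?cv z s \<and> ?cv z s'} + (if s = s' then r else 0)"
      using D that unfolding differential_poset_def by auto
    ultimately show ?thesis by simp
  qed
  show "card ?S \<le> card ?T"
  proof (rule card_le_if_scalars_zero[where M = M])
    show "finite ?S" "finite ?T" by (rule fin)+
    show "y \<in> ?T" if "s \<in> ?S" "M s y \<noteq> 0" for s y
      using that cover_rk[of s y] by (auto simp: M_def split: if_splits)
    show "\<forall>s\<in>?S. c s = 0" if "\<forall>y. (\<Sum>s\<in>?S. c s * M s y) = 0" for c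
      using scalars_zero_if_gram_identity[OF fin _ gram that] \<open>r > 0\<close> by simp
  qed
qed

definition convolution :: "(nat \<Rightarrow> int) \<Rightarrow> (nat \<Rightarrow> int) \<Rightarrow> nat \<Rightarrow> int" where
  "convolution a b m = (\<Sum>k\<le>m. a k * b (m - k))"

definition backward_diff :: "(nat \<Rightarrow> int) \<Rightarrow> nat \<Rightarrow> int" where
  "backward_diff a k = a k - (if k = 0 then 0 else a (k - 1))"

lemma backward_diff_convolution:
  "backward_diff (convolution a b) m = convolution (backward_diff a) b m"
proof (cases m)
  case (Suc m')
  have "(\<Sum>k\<le>Suc m'. (if k = 0 then 0 else a (k - 1)) * b (Suc m' - k)) = convolution a b m'"
    by (subst sum.atMost_Suc_shift) (simp add: convolution_def)
  then show ?thesis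
    using Suc by (simp add: backward_diff_def convolution_def algebra_simps sum_subtractf)
qed (simp add: backward_diff_def convolution_def)

lemma backward_diff_nonneg_if_mono:
  assumes "mono a" "a 0 \<ge> 0"
  shows "backward_diff a k \<ge> 0"
  using assms by (cases k) (auto simp: backward_diff_def mono_iff_le_Suc)

lemma convolution_mono:
  assumes "\<And>k. a k \<ge> 0" "mono b" "\<And>k. b k \<ge> 0"
  shows "mono (convolution a b)"
  unfolding mono_iff_le_Suc
proof
  fix m
  have "convolution a b m \<le> (\<Sum>k\<le>m. a k * b (Suc m - k))"
    unfolding convolution_def
    by (intro sum_mono mult_left_mono) (use assms in \<open>auto simp: Suc_diff_le mono_iff_le_Suc\<close>)
  also have "\<dots> \<le> convolution a b (Suc m)"
    using assms by (simp add: convolution_def)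
  finally show "convolution a b m \<le> convolution a b (Suc m)" .
qed

lemma rank_count_prod:
  assumes "\<And>k. finite {x\<in>P. rk x = k}" "\<And>k. finite {x\<in>P'. rk' x = k}"
  shows "rank_count (P \<times> P') (prod_rk rk rk') (int m)
       = convolution (\<lambda>k. int (card {x\<in>P. rk x = k})) (\<lambda>k. int (card {x\<in>P'. rk' x = k})) m"
proof -
  have "{u\<in>P \<times> P'. prod_rk rk rk' u = m} = (\<Union>k\<le>m. {x\<in>P. rk x = k} \<times> {x\<in>P'. rk' x = m - k})"
    by (auto simp: prod_rk_def)
  moreover have "card (\<Union>k\<le>m. {x\<in>P. rk x = k} \<times> {x\<in>P'. rk' x = m - k})
      = (\<Sum>k\<le>m. card ({x\<in>P. rk x = k} \<times> {x\<in>P'. rk' x = m - k}))"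
    by (rule card_UN_disjoint) (use assms in auto)
  ultimately show ?thesis
    by (simp add: rank_count_def convolution_def card_cartesian_product)
qed

lemma delta_rank_count_nat:
  "delta_rank_count Q rk (int m) = backward_diff (\<lambda>k. rank_count Q rk (int k)) m"
  by (cases m) (simp_all add: delta_rank_count_def backward_diff_def rank_count_def nat_add_distrib)

lemma delta_rank_count_neg: "n < 0 \<Longrightarrow> delta_rank_count Q rk n = 0"
  by (simp add: delta_rank_count_def rank_count_def)

theorem proposition4p4:
  fixes P :: "'a set" and le :: "'a \<Rightarrow> 'a \<Rightarrow> bool" and rk :: "'a \<Rightarrow> nat"
    and P' :: "'b set" and le' :: "'b \<Rightarrow> 'b \<Rightarrow> bool" and rk' :: "'b \<Rightarrow> nat"
    and r r' :: nat and n j :: int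
  assumes "differential_poset P le rk r"
    and "differential_poset P' le' rk' r'"
    and "n \<ge> 1" and "1 \<le> j" and "j \<le> n"
  shows "delta_rank_count (P \<times> P') (prod_rk rk rk') n
           \<ge> delta_rank_count (P \<times> P') (prod_rk rk rk') (n - j)"
proof -
  define a where "a = (\<lambda>k. int (card {x\<in>P. rk x = k}))"
  define b where "b = (\<lambda>k. int (card {x\<in>P'. rk' x = k}))"
  have "mono a" "mono b"
    using differential_poset_rank_card_mono[OF assms(1)] differential_poset_rank_card_mono[OF assms(2)]
    by (auto simp: a_def b_def mono_def)
  then have "mono (convolution (backward_diff a) b)"
    by (intro convolution_mono backward_diff_nonneg_if_mono) (auto simp: a_def b_def)
  moreover have delta: "delta_rank_count (P \<times> P') (prod_rk rk rk') (int m)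
      = convolution (backward_diff a) b m" for m
    unfolding delta_rank_count_nat backward_diff_convolution[symmetric] a_def b_def
    using rank_count_prod[OF differential_poset_finite_rank[OF assms(1)]
        differential_poset_finite_rank[OF assms(2)]]
    by simp
  moreover have "convolution (backward_diff a) b 0 \<ge> 0"
    by (simp add: convolution_def backward_diff_def a_def b_def)
  ultimately show ?thesis
    using delta[of "nat n"] delta[of "nat (n - j)"] delta_rank_count_neg[of "n - j"] assms(3-5)
    by (cases "n - j < 0") (auto dest: monoD[of _ 0 "nat n"] monoD[of _ "nat (n - j)" "nat n"])
qed

end
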